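(* Let $(E,\mathcal{E},\nu)$ be a $\sigma$-finite measure space in which every singleton set is measurable with positive measure, $\phi$ a Young function satisfying the $\Delta_2$-condition, $w$ a weight function, and $\Psi:E\to E$ a non-singular measurable transformation such that the composition operator $C_\Psi f=f\circ\Psi$ is a bounded linear operator on the Orlicz-Lorentz space $L_{(\phi,w)}$. Let $m\ge0$ be an integer. If the map $\Psi|_{\Psi^m(E)}:\Psi^m(E)\to\Psi^m(E)$ is not injective, then $\mathcal{D}(C_\Psi)>m$.
   Context: A Young function is a convex $\phi:[0,\infty)\to[0,\infty)$ with $\phi(x)=0\iff x=0$ and $\lim_{x\to\infty}\phi(x)=\infty$; $\Delta_2$-condition: $\phi(2x)\le k\phi(x)$ for some $k>0$ and all $x>0$. A weight function is a non-increasing locally integrable $w:(0,\infty)\to(0,\infty)$ with $\int_0^\infty w=\infty$. For measurable $f$, $\nu_f(s)=\nu\{|f|>s\}$, $f^*(t)=\inf\{s>0:\nu_f(s)\le t\}$; $L_{(\phi,w)}$ is the space of measurable $f:E\to\mathbb{C}$ with $\int_0^\infty\phi(\alpha f^*(t))w(t)\,dt<\infty$ for some $\alpha>0$, with the Luxemburg norm. $\Psi$ non-singular: $\nu(\Psi^{-1}(S))=0$ whenever $\nu(S)=0$; $\Psi^0=\mathrm{id}$. The descent $\mathcal{D}(T)$ is the smallest integer $m$ with $\mathcal{R}(T^{m+1})=\mathcal{R}(T^m)$ ($\mathcal{R}$ = range), and $\infty$ if no such $m$ exists. *)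

theory Defs
  imports "HOL-Analysis.Analysis"
begin

definition young_function :: "(real \<Rightarrow> real) \<Rightarrow> bool" where
  "young_function \<phi> \<longleftrightarrow>
     convex_on {0..} \<phi> \<and> (\<forall>x\<ge>0. \<phi> x \<ge> 0) \<and>
     (\<forall>x\<ge>0. \<phi> x = 0 \<longleftrightarrow> x = 0) \<and> filterlim \<phi> at_top at_top"

definition delta2 :: "(real \<Rightarrow> real) \<Rightarrow> bool" where
  "delta2 \<phi> \<longleftrightarrow> (\<exists>k>0. \<forall>x>0. \<phi> (2 * x) \<le> k * \<phi> x)"

definition weight_function :: "(real \<Rightarrow> real) \<Rightarrow> bool" where
  "weight_function w \<longleftrightarrow>
     (\<forall>t>0. w t > 0) \<and>
     (\<forall>s t. 0 < s \<longrightarrow> s \<le> t \<longrightarrow> w t \<le> w s) \<and>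
     (\<forall>t>0. set_integrable lborel {0<..t} w) \<and>
     (\<integral>\<^sup>+ t. ennreal (w t) * indicator {0<..} t \<partial>lborel) = \<infinity>"

definition distrib_fun :: "'a measure \<Rightarrow> ('a \<Rightarrow> complex) \<Rightarrow> real \<Rightarrow> ennreal" where
  "distrib_fun M f s = emeasure M {x \<in> space M. cmod (f x) > s}"

text \<open>Decreasing rearrangement f*(t) = inf{s>0. nu_f(s) \<le> t} (value oo if the set is empty).\<close>
definition rearr :: "'a measure \<Rightarrow> ('a \<Rightarrow> complex) \<Rightarrow> real \<Rightarrow> ennreal" where
  "rearr M f t = Inf {ennreal s | s. s > 0 \<and> distrib_fun M f s \<le> ennreal t}"

definition OL_modular ::
  "'a measure \<Rightarrow> (real \<Rightarrow> real) \<Rightarrow> (real \<Rightarrow> real) \<Rightarrow> real \<Rightarrow> ('a \<Rightarrow> complex) \<Rightarrow> ennreal" where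
  "OL_modular M \<phi> w \<alpha> f =
     (\<integral>\<^sup>+ t. (if rearr M f t = \<infinity> then \<infinity>
               else ennreal (\<phi> (\<alpha> * enn2real (rearr M f t)) * w t)) * indicator {0<..} t \<partial>lborel)"

text \<open>Orlicz-Lorentz space; functions are taken extensional (zero outside space M).\<close>
definition OL_space ::
  "'a measure \<Rightarrow> (real \<Rightarrow> real) \<Rightarrow> (real \<Rightarrow> real) \<Rightarrow> ('a \<Rightarrow> complex) set" where
  "OL_space M \<phi> w = {f \<in> borel_measurable M. (\<forall>x. x \<notin> space M \<longrightarrow> f x = 0) \<and>
                       (\<exists>\<alpha>>0. OL_modular M \<phi> w \<alpha> f < \<infinity>)}"

definition lux_norm ::
  "'a measure \<Rightarrow> (real \<Rightarrow> real) \<Rightarrow> (real \<Rightarrow> real) \<Rightarrow> ('a \<Rightarrow> complex) \<Rightarrow> real" where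
  "lux_norm M \<phi> w f = Inf {\<epsilon>. \<epsilon> > 0 \<and> OL_modular M \<phi> w (1 / \<epsilon>) f \<le> 1}"

definition comp_op :: "'a measure \<Rightarrow> ('a \<Rightarrow> 'a) \<Rightarrow> ('a \<Rightarrow> complex) \<Rightarrow> ('a \<Rightarrow> complex)" where
  "comp_op M \<Psi> f = (\<lambda>x. if x \<in> space M then f (\<Psi> x) else 0)"

definition nonsingular :: "'a measure \<Rightarrow> ('a \<Rightarrow> 'a) \<Rightarrow> bool" where
  "nonsingular M \<Psi> \<longleftrightarrow>
     (\<forall>S \<in> sets M. emeasure M S = 0 \<longrightarrow> emeasure M (\<Psi> -` S \<inter> space M) = 0)"

definition descent :: "('b \<Rightarrow> 'b) \<Rightarrow> 'b set \<Rightarrow> enat" where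
  "descent T X = (if \<exists>m. (T ^^ Suc m) ` X = (T ^^ m) ` X
                  then enat (LEAST m. (T ^^ Suc m) ` X = (T ^^ m) ` X) else \<infinity>)"

end

theory Submission
  imports Defs
begin

text \<open>If \<Psi> identifies two points a \<noteq> b of \<Psi>^m(E), say a = \<Psi>^m x and b = \<Psi>^m y, then every
  function in the range of C_\<Psi>^(m+1) takes equal values at x and y, whereas C_\<Psi>^m applied to
  the indicator of {a} does not. Singletons have finite measure by \<sigma>-finiteness, so their
  indicators lie in the Orlicz-Lorentz space: the rearrangement of the indicator of a set of
  measure c is the indicator of [0, c), whose modular is \<phi>(1) times the finite integral of w
  over (0, c).\<close>

lemma funpow_image_Suc_eq_mono:
  fixes T :: "'a \<Rightarrow> 'a"
  assumes "(T ^^ Suc k) ` X = (T ^^ k) ` X" and "k \<le> n"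
  shows "(T ^^ Suc n) ` X = (T ^^ n) ` X"
  using assms(2)
proof (induction n rule: dec_induct)
  case base
  show ?case by (fact assms(1))
next
  case (step n)
  have "(T ^^ Suc (Suc n)) ` X = T ` (T ^^ Suc n) ` X"
    by (simp add: image_comp)
  also have "\<dots> = T ` (T ^^ n) ` X"
    by (simp only: step.IH)
  also have "\<dots> = (T ^^ Suc n) ` X"
    by (simp add: image_comp)
  finally show ?case .
qed

lemma descent_gt_if_image_funpow_Suc_ne:
  assumes "(T ^^ Suc m) ` X \<noteq> (T ^^ m) ` X"
  shows "enat m < descent T X"
proof (cases "\<exists>k. (T ^^ Suc k) ` X = (T ^^ k) ` X")
  case True
  define k where "k = (LEAST k. (T ^^ Suc k) ` X = (T ^^ k) ` X)"
  have "(T ^^ Suc k) ` X = (T ^^ k) ` X"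
    unfolding k_def using True by (rule LeastI_ex)
  then have "m < k"
    using assms funpow_image_Suc_eq_mono by (metis not_le)
  then show ?thesis
    using True by (simp add: descent_def k_def)
qed (simp add: descent_def)

lemma funpow_in_space:
  assumes "\<Psi> \<in> measurable M M" and "x \<in> space M"
  shows "(\<Psi> ^^ n) x \<in> space M"
  by (induction n) (simp_all add: assms measurable_space[OF assms(1)])

lemma comp_op_funpow_apply:
  assumes "\<Psi> \<in> measurable M M" and "x \<in> space M"
  shows "(comp_op M \<Psi> ^^ n) h x = h ((\<Psi> ^^ n) x)"
  using assms(2)
proof (induction n arbitrary: x)
  case 0
  show ?case by simp
next
  case (Suc n)
  have "(comp_op M \<Psi> ^^ Suc n) h x = (comp_op M \<Psi> ^^ n) h (\<Psi> x)"
    using Suc.prems by (simp add: comp_op_def)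
  also have "\<dots> = h ((\<Psi> ^^ n) (\<Psi> x))"
    using Suc.IH measurable_space[OF assms(1) Suc.prems] by blast
  also have "\<dots> = h ((\<Psi> ^^ Suc n) x)"
    by (simp add: funpow_Suc_right del: funpow.simps)
  finally show ?case .
qed

lemma image_comp_op_funpow_Suc_ne:
  assumes "\<Psi> \<in> measurable M M"
    and "\<not> inj_on \<Psi> ((\<Psi> ^^ m) ` space M)"
    and separating: "\<And>a b. a \<in> space M \<Longrightarrow> b \<in> space M \<Longrightarrow> a \<noteq> b \<Longrightarrow> \<exists>g\<in>X. g a \<noteq> g b"
  shows "(comp_op M \<Psi> ^^ Suc m) ` X \<noteq> (comp_op M \<Psi> ^^ m) ` X"
proof
  assume range_eq: "(comp_op M \<Psi> ^^ Suc m) ` X = (comp_op M \<Psi> ^^ m) ` X"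
  obtain x y where xy: "x \<in> space M" "y \<in> space M" "\<Psi> ((\<Psi> ^^ m) x) = \<Psi> ((\<Psi> ^^ m) y)"
      "(\<Psi> ^^ m) x \<noteq> (\<Psi> ^^ m) y"
    using assms(2) unfolding inj_on_def by blast
  obtain g where "g \<in> X" and g_ne: "g ((\<Psi> ^^ m) x) \<noteq> g ((\<Psi> ^^ m) y)"
    using separating xy funpow_in_space[OF assms(1)] by blast
  then have "(comp_op M \<Psi> ^^ m) g \<in> (comp_op M \<Psi> ^^ Suc m) ` X"
    using range_eq by simp
  then obtain h where h: "(comp_op M \<Psi> ^^ m) g = (comp_op M \<Psi> ^^ Suc m) h"
    by blast
  have "g ((\<Psi> ^^ m) z) = h (\<Psi> ((\<Psi> ^^ m) z))" if "z \<in> space M" for z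
  proof -
    have "g ((\<Psi> ^^ m) z) = (comp_op M \<Psi> ^^ m) g z"
      using comp_op_funpow_apply[OF assms(1) that] by simp
    also have "\<dots> = (comp_op M \<Psi> ^^ Suc m) h z"
      by (simp only: h)
    also have "\<dots> = h ((\<Psi> ^^ Suc m) z)"
      by (rule comp_op_funpow_apply[OF assms(1) that])
    also have "\<dots> = h (\<Psi> ((\<Psi> ^^ m) z))"
      by simp
    finally show ?thesis .
  qed
  then show False
    using xy g_ne by metis
qed

lemma emeasure_singleton_finite:
  assumes "sigma_finite_measure M" and "x \<in> space M" and "{x} \<in> sets M"
  shows "emeasure M {x} < \<infinity>"
proof -
  obtain A :: "nat \<Rightarrow> 'a set" where A: "range A \<subseteq> sets M" "\<Union>(range A) = space M"
      "\<And>i. emeasure M (A i) \<noteq> \<infinity>"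
    using sigma_finite_measure.sigma_finite[OF assms(1)] by metis
  then obtain i where "x \<in> A i"
    using assms(2) by blast
  then have "emeasure M {x} \<le> emeasure M (A i)"
    using A(1) by (intro emeasure_mono) auto
  then show ?thesis
    using A(3)[of i] by (simp add: less_top top_unique)
qed

lemma rearr_indicator:
  assumes "A \<in> sets M" and "emeasure M A = ennreal c" and "0 \<le> t"
  shows "rearr M (indicator A) t = (if t < c then 1 else 0)"
proof -
  have distrib: "distrib_fun M (indicator A) s = (if s < 1 then ennreal c else 0)" if "0 < s" for s
  proof -
    have "{x \<in> space M. cmod (indicator A x) > s} = (if s < 1 then A else {})"
      using that sets.sets_into_space[OF assms(1)] by (auto simp: indicator_def)
    then show ?thesis
      using assms(2) by (simp add: distrib_fun_def)
  qed
  show ?thesis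
  proof (cases "t < c")
    case True
    then have "\<not> ennreal c \<le> ennreal t"
      using assms(3) by (simp add: ennreal_le_iff)
    then have "distrib_fun M (indicator A) s \<le> ennreal t \<longleftrightarrow> 1 \<le> s" if "0 < s" for s
      using distrib[OF that] by auto
    then have "{ennreal s |s. 0 < s \<and> distrib_fun M (indicator A) s \<le> ennreal t}
        = {ennreal s |s. 1 \<le> s}"
      using less_le_trans[OF zero_less_one] by blast
    moreover have "Inf {ennreal s |s. 1 \<le> s} = 1"
    proof (rule antisym)
      show "Inf {ennreal s |s. 1 \<le> s} \<le> 1"
        by (rule Inf_lower) (auto intro: exI[of _ 1])
      show "1 \<le> Inf {ennreal s |s. 1 \<le> s}"
        by (rule Inf_greatest) (auto simp: ennreal_ge_1)
    qed
    ultimately show ?thesis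
      using True by (simp add: rearr_def)
  next
    case False
    then have "distrib_fun M (indicator A) s \<le> ennreal t" if "0 < s" for s
      using distrib[OF that] by (simp add: ennreal_leI)
    then have "{ennreal s |s. 0 < s \<and> distrib_fun M (indicator A) s \<le> ennreal t}
        = {ennreal s |s. 0 < s}"
      by blast
    moreover have "Inf {ennreal s |s. 0 < s} \<le> 0"
      by (rule ennreal_le_epsilon) (auto intro!: Inf_lower)
    ultimately show ?thesis
      using False by (simp add: rearr_def)
  qed
qed

lemma indicator_in_OL_space:
  assumes "young_function \<phi>" and "weight_function w"
    and "A \<in> sets M" and "emeasure M A < \<infinity>"
  shows "indicator A \<in> OL_space M \<phi> w"
proof -
  obtain c where c: "emeasure M A = ennreal c" "0 \<le> c"
    using assms(4) by (cases "emeasure M A") auto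
  have "\<phi> 0 = 0" and "0 \<le> \<phi> 1"
    using assms(1) by (auto simp: young_function_def)
  moreover have "\<And>t. 0 < t \<Longrightarrow> 0 < w t"
    using assms(2) by (simp add: weight_function_def)
  ultimately have integrand_le:
    "(if rearr M (indicator A) t = \<infinity> then \<infinity>
        else ennreal (\<phi> (1 * enn2real (rearr M (indicator A) t)) * w t)) * indicator {0<..} t
     \<le> ennreal (norm (indicator {0<..c + 1} t *\<^sub>R (\<phi> 1 * w t)))" for t
    using rearr_indicator[OF assms(3) c(1), of t] by (auto simp: indicator_def)
  have "set_integrable lborel {0<..c + 1} (\<lambda>t. \<phi> 1 * w t)"
    using assms(2) c(2) by (intro set_integrable_mult_right) (simp add: weight_function_def)
  then have "(\<integral>\<^sup>+ t. ennreal (norm (indicator {0<..c + 1} t *\<^sub>R (\<phi> 1 * w t))) \<partial>lborel) < \<infinity>"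
    by (simp add: set_integrable_def integrable_iff_bounded)
  then have "OL_modular M \<phi> w 1 (indicator A) < \<infinity>"
    unfolding OL_modular_def by (rule le_less_trans[OF nn_integral_mono[OF integrand_le]])
  moreover have "indicator A \<in> borel_measurable M"
    using assms(3) by simp
  moreover have "indicator A x = 0" if "x \<notin> space M" for x
  proof -
    have "x \<notin> A"
      using that sets.sets_into_space[OF assms(3)] by blast
    then show ?thesis
      by simp
  qed
  ultimately show ?thesis
    unfolding OL_space_def by (blast intro: zero_less_one)
qed

theorem corollary4p4:
  fixes M :: "'a measure" and \<phi> w :: "real \<Rightarrow> real" and \<Psi> :: "'a \<Rightarrow> 'a" and m :: nat
  assumes "sigma_finite_measure M"
    and "\<forall>x \<in> space M. {x} \<in> sets M \<and> emeasure M {x} > 0"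
    and "young_function \<phi>" and "delta2 \<phi>"
    and "weight_function w"
    and "\<Psi> \<in> measurable M M" and "nonsingular M \<Psi>"
    and "\<forall>f \<in> OL_space M \<phi> w. comp_op M \<Psi> f \<in> OL_space M \<phi> w"
    and "\<exists>C. \<forall>f \<in> OL_space M \<phi> w. lux_norm M \<phi> w (comp_op M \<Psi> f) \<le> C * lux_norm M \<phi> w f"
    and "\<not> inj_on \<Psi> ((\<Psi> ^^ m) ` space M)"
  shows "descent (comp_op M \<Psi>) (OL_space M \<phi> w) > enat m"
proof -
  have "\<exists>g\<in>OL_space M \<phi> w. g a \<noteq> g b" if "a \<in> space M" "a \<noteq> b" for a b
  proof
    have "{a} \<in> sets M"
      using assms(2) that(1) by blast
    then show "indicator {a} \<in> OL_space M \<phi> w"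
      using assms(1,3,5) that(1) by (intro indicator_in_OL_space emeasure_singleton_finite)
    show "(indicator {a} a :: complex) \<noteq> indicator {a} b"
      using that(2) by simp
  qed
  then have "(comp_op M \<Psi> ^^ Suc m) ` OL_space M \<phi> w \<noteq> (comp_op M \<Psi> ^^ m) ` OL_space M \<phi> w"
    using assms(6,10) by (intro image_comp_op_funpow_Suc_ne) auto
  then show ?thesis
    by (rule descent_gt_if_image_funpow_Suc_ne)
qed

end
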